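(* Let $L$ be multi-group scale invariant and twice differentiable on $U=\{x\in\mathbb{R}^d: x_k\neq0\ \forall k\}$, and let $\rho:=\sup\{\lambda_{\max}(\nabla^2L(x)) : \|x_k\|_2=1\ \forall k\in[K]\}<\infty$. Then for any $x\in U$ and $v\in\mathbb{R}^d$ with $\langle x_k,v_k\rangle=0$ for all $k\in[K]$, $$L(x+v)-L(x)\le\langle v,\nabla L(x)\rangle+\frac{\rho}{2}\sum_{k=1}^K\frac{\|v_k\|_2^2}{\|x_k\|_2^2}.$$
   Context: Fix positive integers $d_1,\ldots,d_K$ with $d=\sum_k d_k$ and write $x\in\mathbb{R}^d$ as $x=(x_1,\ldots,x_K)$ with $x_k\in\mathbb{R}^{d_k}$ (consecutive blocks); similarly $v=(v_1,\dots,v_K)$. A function $f$ on $U$ is multi-group scale invariant iff $f(c_1x_1,\ldots,c_Kx_K)=f(x_1,\ldots,x_K)$ for all $x\in U$ and all $c_1,\ldots,c_K>0$. *)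

theory Defs
  imports "HOL-Analysis.Analysis"
begin

text \<open>Coordinates of R^d are indexed by a finite linearly ordered type 'n; the
  group map grp :: 'n => 'k (monotone and surjective) splits them into K = CARD('k)
  consecutive nonempty blocks.  The block x_k is represented as the vector that agrees
  with x on the coordinates of group k and is zero elsewhere (an isometric embedding of
  R^(d_k) into R^d, so norms and inner products are preserved).\<close>

definition blk :: "('n::finite \<Rightarrow> 'k) \<Rightarrow> real^'n \<Rightarrow> 'k \<Rightarrow> real^'n" where
  "blk grp x k = (\<chi> i. if grp i = k then x $ i else 0)"

definition gscale :: "('n::finite \<Rightarrow> 'k) \<Rightarrow> ('k \<Rightarrow> real) \<Rightarrow> real^'n \<Rightarrow> real^'n" where
  "gscale grp c x = (\<chi> i. c (grp i) * x $ i)"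

definition blockU :: "('n::finite \<Rightarrow> 'k) \<Rightarrow> (real^'n) set" where
  "blockU grp = {x. \<forall>k. blk grp x k \<noteq> 0}"

definition multi_group_scale_invariant ::
    "('n::finite \<Rightarrow> 'k) \<Rightarrow> (real^'n) set \<Rightarrow> (real^'n \<Rightarrow> 'a) \<Rightarrow> bool" where
  "multi_group_scale_invariant grp U f \<longleftrightarrow>
     (\<forall>x\<in>U. \<forall>c. (\<forall>k. c k > 0) \<longrightarrow> f (gscale grp c x) = f x)"

definition lambda_max :: "real^'n^'n \<Rightarrow> real" where
  "lambda_max A = Max {l. \<exists>v. v \<noteq> 0 \<and> A *v v = l *\<^sub>R v}"

end

(* Scale invariance in each block makes the gradient and the Hessian homogeneous of degree -1
   and -2 in every block, so the Hessian at y is congruent to the Hessian at the point with all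
   blocks normalised; there its quadratic form is at most rho |w|^2, whence
   v . H(y) v <= rho * sum_k |v_k|^2 / |y_k|^2.  On the segment x + t v with v_k orthogonal to x_k
   the block norms only grow, so the second derivative of t -> L(x + t v) stays below
   rho * sum_k |v_k|^2 / |x_k|^2 and Taylor's formula gives the claim.  Two facts behind the
   Rayleigh bound need separate proofs: the Hessian is symmetric (Young's theorem, since G is
   only assumed differentiable), and rho >= 0, because L is constant along the ray through each
   block x_k, which is therefore a direction of zero curvature. *)

theory Submission
  imports Defs "HOL-Computational_Algebra.Polynomial"
begin

definition charpoly :: "real^'n^'n \<Rightarrow> real poly" where
  "charpoly A = (\<Sum>p | p permutes (UNIV::'n set). smult (of_int (sign p))
      (\<Prod>i\<in>UNIV. [: A$i$p i, - (if i = p i then 1 else 0) :]))"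

lemma poly_charpoly: "poly (charpoly A) l = det (A - l *\<^sub>R mat 1)"
  unfolding charpoly_def det_def poly_sum
  by (intro sum.cong refl) (simp add: poly_prod mat_def algebra_simps)

lemma det_shift_eq_0_iff_eigenvalue:
  fixes A :: "real^'n^'n"
  shows "det (A - l *\<^sub>R mat 1) = 0 \<longleftrightarrow> (\<exists>v. v \<noteq> 0 \<and> A *v v = l *\<^sub>R v)"
proof -
  have "det (A - l *\<^sub>R mat 1) \<noteq> 0 \<longleftrightarrow> (\<forall>v. (A - l *\<^sub>R mat 1) *v v = 0 \<longrightarrow> v = 0)"
    by (simp add: invertible_det_nz[symmetric] invertible_left_inverse matrix_left_invertible_ker)
  moreover have "(A - l *\<^sub>R mat 1) *v v = 0 \<longleftrightarrow> A *v v = l *\<^sub>R v" for v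
    by (simp add: matrix_vector_mult_diff_rdistrib scaleR_matrix_vector_assoc[symmetric])
  ultimately show ?thesis by blast
qed

lemma maximizer_of_quadratic_form_is_eigenvector:
  fixes A :: "real^'n^'n"
  assumes sym: "\<And>u w. (A *v u) \<bullet> w = u \<bullet> (A *v w)"
    and max: "\<And>w. w \<bullet> (A *v w) \<le> \<mu> * (w \<bullet> w)"
    and u: "u \<bullet> (A *v u) = \<mu> * (u \<bullet> u)"
  shows "A *v u = \<mu> *\<^sub>R u"
proof -
  define r where "r = A *v u - \<mu> *\<^sub>R u"
  define f where "f = (\<lambda>s. (u + s *\<^sub>R r) \<bullet> (A *v (u + s *\<^sub>R r)) - \<mu> * ((u + s *\<^sub>R r) \<bullet> (u + s *\<^sub>R r)))"
  have "f = (\<lambda>s. 2 * s * (r \<bullet> r) + s^2 * (r \<bullet> (A *v r) - \<mu> * (r \<bullet> r)))"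
    using sym[of r u] u unfolding f_def r_def fun_eq_iff
    by (simp add: matrix_vector_right_distrib matrix_vector_mult_scaleR
        matrix_vector_mult_diff_distrib inner_add_left inner_add_right inner_diff_left
        inner_diff_right inner_commute power2_eq_square algebra_simps)
  then have "DERIV f 0 :> 2 * (r \<bullet> r)"
    by (auto intro!: derivative_eq_intros)
  moreover have "f s \<le> f 0" for s
    using max[of "u + s *\<^sub>R r"] u by (simp add: f_def)
  ultimately have "2 * (r \<bullet> r) = 0"
    by (intro DERIV_local_max[OF _ zero_less_one]) auto
  then show ?thesis by (simp add: r_def)
qed

lemma finite_eigenvalues:
  fixes A :: "real^'n^'n"
  shows "finite {l. \<exists>v. v \<noteq> 0 \<and> A *v v = l *\<^sub>R v}"
proof -
  obtain B where B: "B > 0" "\<And>v. norm (A *v v) \<le> norm v * B"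
    using bounded_linear.pos_bounded[OF matrix_vector_mul_bounded_linear] by blast
  have "\<not> (\<exists>v. v \<noteq> 0 \<and> A *v v = (B + 1) *\<^sub>R v)"
  proof
    assume "\<exists>v. v \<noteq> 0 \<and> A *v v = (B + 1) *\<^sub>R v"
    then obtain v where "v \<noteq> 0" "norm (A *v v) = (B + 1) * norm v"
      using B(1) by force
    with B(2)[of v] show False by (simp add: algebra_simps)
  qed
  then have "charpoly A \<noteq> 0"
    by (metis poly_0 poly_charpoly det_shift_eq_0_iff_eigenvalue)
  moreover have "{l. \<exists>v. v \<noteq> 0 \<and> A *v v = l *\<^sub>R v} \<subseteq> {l. poly (charpoly A) l = 0}"
    by (auto simp: poly_charpoly det_shift_eq_0_iff_eigenvalue)
  ultimately show ?thesis using poly_roots_finite finite_subset by blast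
qed

lemma eigenvalue_le_lambda_max:
  fixes A :: "real^'n^'n"
  assumes "v \<noteq> 0" "A *v v = l *\<^sub>R v"
  shows "l \<le> lambda_max A"
  unfolding lambda_max_def using assms by (intro Max_ge[OF finite_eigenvalues]) auto

lemma quadratic_form_le_lambda_max:
  fixes A :: "real^'n^'n"
  assumes sym: "\<And>u w. (A *v u) \<bullet> w = u \<bullet> (A *v w)"
  shows "w \<bullet> (A *v w) \<le> lambda_max A * (norm w)^2"
proof -
  define q where "q = (\<lambda>u::real^'n. u \<bullet> (A *v u))"
  have "continuous_on (sphere 0 1) q" unfolding q_def
    by (intro continuous_intros linear_continuous_on matrix_vector_mul_bounded_linear)
  moreover have "sphere (0::real^'n) 1 \<noteq> {}" by simp
  ultimately obtain u where "u \<in> sphere 0 1" and umax: "\<And>w. w \<in> sphere 0 1 \<Longrightarrow> q w \<le> q u"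
    using continuous_attains_sup[OF compact_sphere] by blast
  then have u: "norm u = 1" by simp
  have qle: "q w \<le> q u * (w \<bullet> w)" for w
  proof (cases "w = 0")
    case False
    have "q ((1 / norm w) *\<^sub>R w) \<le> q u" using False by (intro umax) simp
    moreover have "q ((1 / norm w) *\<^sub>R w) = q w / (w \<bullet> w)"
      by (simp add: q_def matrix_vector_mult_scaleR dot_square_norm power2_eq_square)
    ultimately show ?thesis
      using False by (simp add: divide_le_eq)
  qed (simp add: q_def)
  have "A *v u = q u *\<^sub>R u"
    using qle u by (intro maximizer_of_quadratic_form_is_eigenvector[OF sym]) (auto simp: q_def dot_square_norm)
  then have "q u \<le> lambda_max A"
    using u by (intro eigenvalue_le_lambda_max) auto
  then have "q u * (w \<bullet> w) \<le> lambda_max A * (w \<bullet> w)"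
    by (simp add: mult_right_mono)
  then show ?thesis
    using qle[of w] by (simp add: q_def dot_square_norm)
qed

lemma lambda_max_nonneg:
  fixes A :: "real^'n^'n"
  assumes sym: "\<And>u w. (A *v u) \<bullet> w = u \<bullet> (A *v w)"
    and "u \<noteq> 0" "u \<bullet> (A *v u) \<ge> 0"
  shows "lambda_max A \<ge> 0"
  using quadratic_form_le_lambda_max[OF sym, of u] assms(2,3)
  by (metis order_trans zero_le_mult_iff zero_less_norm_iff zero_less_power not_le)

lemma has_real_derivative_along_line:
  fixes F :: "'a::real_normed_vector \<Rightarrow> real"
  assumes "(F has_derivative F') (at (p + t *\<^sub>R w))"
  shows "((\<lambda>t. F (p + t *\<^sub>R w)) has_real_derivative F' w) (at t)"
proof -
  have "((\<lambda>t. p + t *\<^sub>R w) has_derivative (\<lambda>s. s *\<^sub>R w)) (at t)"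
    by (auto intro!: derivative_eq_intros)
  from has_derivative_compose[OF this assms] show ?thesis
    by (rule has_derivative_imp_has_field_derivative)
      (simp add: linear_cmul[OF has_derivative_linear[OF assms]])
qed

definition second_difference :: "('a::real_vector \<Rightarrow> real) \<Rightarrow> 'a \<Rightarrow> 'a \<Rightarrow> 'a \<Rightarrow> real" where
  "second_difference L y h k = L (y + h + k) - L (y + h) - L (y + k) + L y"

lemma second_difference_commute: "second_difference L y h k = second_difference L y k h"
  by (simp add: second_difference_def add_ac)

lemma second_difference_estimate:
  fixes L :: "'a::real_inner \<Rightarrow> real" and G :: "'a \<Rightarrow> 'a"
  assumes grad: "\<And>z. z \<in> ball y r \<Longrightarrow> (L has_derivative (\<lambda>h. G z \<bullet> h)) (at z)"
    and lin: "linear G'"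
    and approx: "\<And>u. norm u < d \<Longrightarrow> norm (G (y + u) - G y - G' u) \<le> e * norm u"
    and "e \<ge> 0" and small: "norm h + norm k < min d r"
  shows "\<bar>second_difference L y h k - G' k \<bullet> h\<bar> \<le> 2 * e * (norm h + norm k)^2"
proof -
  \<comment> \<open>mean value theorem for the difference of L along two parallel segments\<close>
  define N where "N = norm h + norm k"
  define \<phi> where "\<phi> = (\<lambda>t. L ((y + k) + t *\<^sub>R h) - L (y + t *\<^sub>R h))"
  define \<phi>' where "\<phi>' = (\<lambda>t. G ((y + k) + t *\<^sub>R h) \<bullet> h - G (y + t *\<^sub>R h) \<bullet> h)"
  have short: "norm (k + t *\<^sub>R h) \<le> N" "norm (t *\<^sub>R h) \<le> N" if "0 \<le> t" "t \<le> 1" for t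
  proof -
    have "norm (t *\<^sub>R h) \<le> norm h" using that by (simp add: mult_left_le_one_le)
    then show "norm (k + t *\<^sub>R h) \<le> N" "norm (t *\<^sub>R h) \<le> N"
      using norm_triangle_ineq[of k "t *\<^sub>R h"] norm_ge_zero[of k] unfolding N_def by linarith+
  qed
  have "DERIV \<phi> t :> \<phi>' t" if "0 \<le> t" "t \<le> 1" for t
  proof -
    have "(y + k) + t *\<^sub>R h \<in> ball y r" "y + t *\<^sub>R h \<in> ball y r"
      using short[OF that] small norm_minus_cancel[of "k + t *\<^sub>R h"]
      by (simp_all add: dist_norm N_def add.assoc)
    then show ?thesis unfolding \<phi>_def \<phi>'_def
      by (intro derivative_intros has_real_derivative_along_line grad)
  qed
  then obtain \<tau> where \<tau>: "0 < \<tau>" "\<tau> < 1" and mvt: "\<phi> 1 - \<phi> 0 = \<phi>' \<tau>"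
    using MVT2[of 0 1 \<phi> \<phi>'] by auto
  define u1 where "u1 = k + \<tau> *\<^sub>R h"
  define u2 where "u2 = \<tau> *\<^sub>R h"
  define R where "R = (\<lambda>u. G (y + u) - G y - G' u)"
  have "second_difference L y h k - G' k \<bullet> h = R u1 \<bullet> h - R u2 \<bullet> h"
    using mvt unfolding second_difference_def \<phi>_def \<phi>'_def R_def u1_def u2_def
    by (simp add: linear_add[OF lin] linear_cmul[OF lin] inner_diff_left inner_add_left add_ac)
  also have "\<bar>\<dots>\<bar> \<le> e * norm u1 * norm h + e * norm u2 * norm h"
    using approx[of u1] approx[of u2] short[of \<tau>] \<tau> small
    unfolding R_def u1_def u2_def N_def
    by (smt (verit) Cauchy_Schwarz_ineq2 mult_right_mono norm_ge_zero)
  also have "\<dots> \<le> e * N * N + e * N * N"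
    using short[of \<tau>] \<tau> \<open>e \<ge> 0\<close> unfolding u1_def u2_def
    by (intro add_mono mult_mono mult_left_mono) (auto simp: N_def)
  finally show ?thesis by (simp add: N_def power2_eq_square)
qed

lemma derivative_of_gradient_asymmetry_le:
  fixes L :: "'a::real_inner \<Rightarrow> real" and G :: "'a \<Rightarrow> 'a"
  assumes "r > 0"
    and grad: "\<And>z. z \<in> ball y r \<Longrightarrow> (L has_derivative (\<lambda>h. G z \<bullet> h)) (at z)"
    and hess: "(G has_derivative G') (at y)"
    and "e > 0"
  shows "\<bar>G' k \<bullet> h - G' h \<bullet> k\<bar> \<le> 4 * e * (norm h + norm k)^2"
proof -
  have lin: "linear G'" using hess has_derivative_linear by blast
  define N where "N = norm h + norm k"
  define a where "a = G' k \<bullet> h"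
  define b where "b = G' h \<bullet> k"
  obtain d where "d > 0" and
    d: "\<And>z. norm (z - y) < d \<Longrightarrow> norm (G z - G y - G' (z - y)) \<le> e * norm (z - y)"
    using hess \<open>e > 0\<close> unfolding has_derivative_at_alt by blast
  have approx: "norm (G (y + u) - G y - G' u) \<le> e * norm u" if "norm u < d" for u
    using d[of "y + u"] that by simp
  define s where "s = min d r / (N + 1)"
  have "s > 0" using \<open>d > 0\<close> \<open>r > 0\<close> by (simp add: s_def N_def add_nonneg_pos)
  have "N \<ge> 0" by (simp add: N_def)
  have "s * N = min d r * (N / (N + 1))" by (simp add: s_def)
  also have "\<dots> < min d r * 1"
    using \<open>d > 0\<close> \<open>r > 0\<close> \<open>N \<ge> 0\<close> by (intro mult_strict_left_mono) auto
  finally have "s * N < min d r" by simp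
  then have small: "norm (s *\<^sub>R h) + norm (s *\<^sub>R k) < min d r"
    "norm (s *\<^sub>R k) + norm (s *\<^sub>R h) < min d r"
    using \<open>s > 0\<close> by (simp_all add: N_def algebra_simps)
  have scale: "G' (s *\<^sub>R v) \<bullet> (s *\<^sub>R w) = s^2 * (G' v \<bullet> w)" for v w
    by (simp add: linear_cmul[OF lin] power2_eq_square)
  have "norm (s *\<^sub>R h) + norm (s *\<^sub>R k) = s * N"
    using \<open>s > 0\<close> by (simp add: N_def algebra_simps)
  then have "\<bar>second_difference L y (s *\<^sub>R h) (s *\<^sub>R k) - s^2 * a\<bar> \<le> 2 * e * (s * N)^2"
    "\<bar>second_difference L y (s *\<^sub>R h) (s *\<^sub>R k) - s^2 * b\<bar> \<le> 2 * e * (s * N)^2"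
    using second_difference_estimate[OF grad lin approx _ small(1)]
      second_difference_estimate[OF grad lin approx _ small(2)] \<open>e > 0\<close>
    unfolding a_def b_def scale second_difference_commute[of L y "s *\<^sub>R k"]
    by (simp_all add: add.commute)
  then have "\<bar>s^2 * a - s^2 * b\<bar> \<le> 4 * e * (s * N)^2"
    unfolding abs_le_iff by linarith
  moreover have "\<bar>s^2 * a - s^2 * b\<bar> = s^2 * \<bar>a - b\<bar>"
    by (simp add: abs_mult right_diff_distrib[symmetric])
  ultimately have "s^2 * \<bar>a - b\<bar> \<le> s^2 * (4 * e * N^2)"
    by (simp add: power_mult_distrib mult_ac)
  then show ?thesis using \<open>s > 0\<close> by (simp add: a_def b_def N_def)
qed

(* Young's form of Schwarz's theorem: the gradient is only differentiable at y, not continuous. *)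
lemma derivative_of_gradient_symmetric:
  fixes L :: "'a::real_inner \<Rightarrow> real" and G :: "'a \<Rightarrow> 'a"
  assumes "open U" "y \<in> U"
    and grad: "\<And>z. z \<in> U \<Longrightarrow> (L has_derivative (\<lambda>h. G z \<bullet> h)) (at z)"
    and hess: "(G has_derivative G') (at y)"
  shows "G' h \<bullet> k = h \<bullet> G' k"
proof -
  obtain r where "r > 0" and r: "ball y r \<subseteq> U"
    using assms(1,2) open_contains_ball by blast
  define M where "M = (norm h + norm k)^2"
  have "\<bar>G' k \<bullet> h - G' h \<bullet> k\<bar> \<le> 0"
  proof (rule field_le_epsilon)
    fix \<epsilon> :: real assume "\<epsilon> > 0"
    have "M \<ge> 0" by (simp add: M_def)
    have "\<epsilon> / (4 * (M + 1)) > 0"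
      using \<open>\<epsilon> > 0\<close> \<open>M \<ge> 0\<close> by (simp add: add_nonneg_pos)
    with \<open>r > 0\<close> have "\<bar>G' k \<bullet> h - G' h \<bullet> k\<bar> \<le> 4 * (\<epsilon> / (4 * (M + 1))) * M"
      unfolding M_def using grad r by (intro derivative_of_gradient_asymmetry_le[where L=L, OF _ _ hess]) auto
    also have "\<dots> = \<epsilon> * (M / (M + 1))"
      using \<open>M \<ge> 0\<close> by (simp add: field_simps)
    also have "\<dots> \<le> \<epsilon> * 1"
      using \<open>\<epsilon> > 0\<close> \<open>M \<ge> 0\<close> by (intro mult_left_mono) auto
    finally show "\<bar>G' k \<bullet> h - G' h \<bullet> k\<bar> \<le> 0 + \<epsilon>" by simp
  qed
  then show ?thesis by (simp add: inner_commute)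
qed

lemma second_order_increment_le:
  fixes f f' f'' :: "real \<Rightarrow> real"
  assumes f: "\<And>t. 0 \<le> t \<Longrightarrow> t \<le> 1 \<Longrightarrow> (f has_real_derivative f' t) (at t)"
    and f': "\<And>t. 0 \<le> t \<Longrightarrow> t \<le> 1 \<Longrightarrow> (f' has_real_derivative f'' t) (at t)"
    and f'': "\<And>t. 0 \<le> t \<Longrightarrow> t \<le> 1 \<Longrightarrow> f'' t \<le> M"
  shows "f 1 - f 0 \<le> f' 0 + M / 2"
proof -
  define diff where "diff m = [f, f', f''] ! m" for m
  have "\<forall>m t. m < 2 \<and> 0 \<le> t \<and> t \<le> 1 \<longrightarrow> DERIV (diff m) t :> diff (Suc m) t"
    using f f' by (auto simp: diff_def less_2_cases_iff)
  from Taylor_up[where a=0 and b=1 and c=0, OF _ _ this] obtain t where "0 < t" "t < 1"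
    "f 1 = (\<Sum>m<2. diff m 0 / fact m * (1 - 0)^m) + diff 2 t / fact 2 * (1 - 0)^2"
    by (auto simp: diff_def)
  then show ?thesis
    using f''[of t] by (simp add: diff_def numeral_2_eq_2)
qed

lemma blk_add: "blk grp (x + y) k = blk grp x k + blk grp y k"
  by (simp add: blk_def vec_eq_iff)

lemma blk_scaleR: "blk grp (t *\<^sub>R x) k = t *\<^sub>R blk grp x k"
  by (simp add: blk_def vec_eq_iff)

lemma blk_gscale: "blk grp (gscale grp c x) k = c k *\<^sub>R blk grp x k"
  by (simp add: blk_def gscale_def vec_eq_iff)

lemma gscale_inverse: "(\<And>k. c k \<noteq> 0) \<Longrightarrow> gscale grp c (gscale grp (\<lambda>k. 1 / c k) x) = x"
  by (simp add: gscale_def vec_eq_iff)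

lemma inner_gscale_swap: "gscale grp c u \<bullet> w = u \<bullet> gscale grp c w"
  by (simp add: gscale_def inner_vec_def algebra_simps)

lemma bounded_linear_gscale: "bounded_linear (gscale grp c)"
  by (rule linear_conv_bounded_linear[THEN iffD1], rule linearI)
    (simp_all add: gscale_def vec_eq_iff algebra_simps)

lemma inner_eq_sum_blk:
  fixes grp :: "'n::finite \<Rightarrow> 'k::finite"
  shows "u \<bullet> w = (\<Sum>k\<in>UNIV. blk grp u k \<bullet> blk grp w k)"
proof -
  have "(\<Sum>k\<in>UNIV. blk grp u k \<bullet> blk grp w k)
      = (\<Sum>k\<in>(UNIV::'k set). \<Sum>i\<in>UNIV. if grp i = k then u$i * w$i else 0)"
    by (simp add: blk_def inner_vec_def if_distrib cong: if_cong)
  also have "\<dots> = (\<Sum>i\<in>UNIV. \<Sum>k\<in>(UNIV::'k set). if grp i = k then u$i * w$i else 0)"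
    by (rule sum.swap)
  also have "\<dots> = u \<bullet> w" by (simp add: inner_vec_def)
  finally show ?thesis by simp
qed

lemma power2_norm_eq_sum_blk:
  fixes grp :: "'n::finite \<Rightarrow> 'k::finite"
  shows "(norm w)^2 = (\<Sum>k\<in>UNIV. (norm (blk grp w k))^2)"
  by (simp add: power2_norm_eq_inner inner_eq_sum_blk[of w w grp])

lemma power2_norm_blk_add_orthogonal:
  assumes "blk grp x k \<bullet> blk grp v k = 0"
  shows "(norm (blk grp (x + t *\<^sub>R v) k))^2 = (norm (blk grp x k))^2 + t^2 * (norm (blk grp v k))^2"
proof -
  have "orthogonal (blk grp x k) (t *\<^sub>R blk grp v k)"
    using assms by (simp add: orthogonal_def)
  from norm_add_Pythagorean[OF this] show ?thesis
    by (simp add: blk_add blk_scaleR power_mult_distrib)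
qed

lemma orthogonal_line_in_blockU:
  assumes x: "x \<in> blockU grp" and orth: "\<And>k. blk grp x k \<bullet> blk grp v k = 0"
  shows "x + t *\<^sub>R v \<in> blockU grp"
proof -
  have "(norm (blk grp (x + t *\<^sub>R v) k))^2 > 0" for k
    using x unfolding power2_norm_blk_add_orthogonal[OF orth]
    by (simp add: blockU_def add_pos_nonneg)
  then show ?thesis by (auto simp: blockU_def)
qed

lemma open_blockU:
  fixes grp :: "'n::finite \<Rightarrow> 'k::finite"
  shows "open (blockU grp)"
proof -
  have "blockU grp = (\<Inter>k. (\<lambda>x. blk grp x k) -` (- {0}))"
    by (auto simp: blockU_def)
  moreover have "continuous_on UNIV (\<lambda>x. blk grp x k)" for k
    by (intro linear_continuous_on linear_conv_bounded_linear[THEN iffD1] linearI)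
      (simp_all add: blk_add blk_scaleR)
  ultimately show ?thesis
    by (auto intro!: open_INT open_vimage)
qed

lemma gscale_in_blockU: "(\<And>k. c k > 0) \<Longrightarrow> y \<in> blockU grp \<Longrightarrow> gscale grp c y \<in> blockU grp"
  by (simp add: blockU_def blk_gscale) (metis less_irrefl)

lemma blockU_eq_gscale_unit_blocks:
  assumes "y \<in> blockU grp"
  obtains z where "z \<in> blockU grp" "\<And>k. norm (blk grp z k) = 1"
    "y = gscale grp (\<lambda>k. norm (blk grp y k)) z"
proof
  define z where "z = gscale grp (\<lambda>k. 1 / norm (blk grp y k)) y"
  have pos: "norm (blk grp y k) > 0" for k
    using assms by (simp add: blockU_def)
  show "z \<in> blockU grp" unfolding z_def using pos assms by (intro gscale_in_blockU) auto
  show "norm (blk grp z k) = 1" for k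
    using pos[of k] by (simp add: z_def blk_gscale)
  show "y = gscale grp (\<lambda>k. norm (blk grp y k)) z"
    unfolding z_def using pos by (intro gscale_inverse[symmetric]) (simp add: order_less_imp_not_eq2)
qed

locale scale_invariant_twice_differentiable =
  fixes grp :: "'n::finite \<Rightarrow> 'k::finite"
    and L :: "real^'n \<Rightarrow> real"
    and G :: "real^'n \<Rightarrow> real^'n"
    and H :: "real^'n \<Rightarrow> real^'n^'n"
  assumes scale_invariant: "multi_group_scale_invariant grp (blockU grp) L"
    and gradient: "\<And>y. y \<in> blockU grp \<Longrightarrow> (L has_derivative (\<lambda>h. G y \<bullet> h)) (at y)"
    and hessian: "\<And>y. y \<in> blockU grp \<Longrightarrow> (G has_derivative (\<lambda>h. H y *v h)) (at y)"
begin

abbreviation unit_block_lambdas :: "real set" where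
  "unit_block_lambdas \<equiv> {lambda_max (H z) | z. \<forall>k. norm (blk grp z k) = 1}"

lemma hessian_symmetric: "y \<in> blockU grp \<Longrightarrow> (H y *v u) \<bullet> w = u \<bullet> (H y *v w)"
  by (rule derivative_of_gradient_symmetric[OF open_blockU _ gradient hessian])

lemma gradient_gscale:
  assumes c: "\<And>k. c k > 0" and y: "y \<in> blockU grp"
  shows "gscale grp c (G (gscale grp c y)) = G y"
proof -
  have "((\<lambda>z. L (gscale grp c z)) has_derivative (\<lambda>h. G (gscale grp c y) \<bullet> gscale grp c h)) (at y)"
    using has_derivative_compose[OF bounded_linear_imp_has_derivative[OF bounded_linear_gscale]
        gradient[OF gscale_in_blockU[OF c y]]] .
  moreover have "((\<lambda>z. L (gscale grp c z)) has_derivative (\<lambda>h. G y \<bullet> h)) (at y)"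
    by (rule has_derivative_transform_within_open[OF gradient[OF y] open_blockU y])
      (use scale_invariant c in \<open>auto simp: multi_group_scale_invariant_def\<close>)
  ultimately have eq: "(\<lambda>h. G (gscale grp c y) \<bullet> gscale grp c h) = (\<lambda>h. G y \<bullet> h)"
    by (rule has_derivative_unique)
  have "gscale grp c (G (gscale grp c y)) \<bullet> h = G y \<bullet> h" for h
    using fun_cong[OF eq, of h] by (simp add: inner_gscale_swap)
  then show ?thesis using vector_eq_rdot by blast
qed

lemma hessian_gscale:
  assumes c: "\<And>k. c k > 0" and y: "y \<in> blockU grp"
  shows "gscale grp c (H (gscale grp c y) *v gscale grp c h) = H y *v h"
proof -
  have "((\<lambda>z. gscale grp c (G (gscale grp c z))) has_derivative
      (\<lambda>h. gscale grp c (H (gscale grp c y) *v gscale grp c h))) (at y)"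
    by (rule has_derivative_compose[OF has_derivative_compose[OF
          bounded_linear_imp_has_derivative[OF bounded_linear_gscale]
          hessian[OF gscale_in_blockU[OF c y]]]
          bounded_linear_imp_has_derivative[OF bounded_linear_gscale]])
  moreover have "((\<lambda>z. gscale grp c (G (gscale grp c z))) has_derivative (\<lambda>h. H y *v h)) (at y)"
    by (rule has_derivative_transform_within_open[OF hessian[OF y] open_blockU y])
      (use gradient_gscale[OF c] in auto)
  ultimately have "(\<lambda>h. gscale grp c (H (gscale grp c y) *v gscale grp c h)) = (\<lambda>h. H y *v h)"
    by (rule has_derivative_unique)
  then show ?thesis by (simp add: fun_eq_iff)
qed

lemma quadratic_form_blk_eq_0:
  assumes z: "z \<in> blockU grp"
  shows "blk grp z k \<bullet> (H z *v blk grp z k) = 0"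
proof -
  define b where "b = blk grp z k"
  have ray: "z + s *\<^sub>R b = gscale grp (\<lambda>j. if j = k then 1 + s else 1) z" for s
    by (simp add: b_def blk_def gscale_def vec_eq_iff algebra_simps)
  have L_const: "L (z + s *\<^sub>R b) = L z" if "s > -1" for s
    unfolding ray using scale_invariant z that by (auto simp: multi_group_scale_invariant_def)
  have slope_0: "G (z + s *\<^sub>R b) \<bullet> b = 0" if "s > -1" for s
  proof (rule DERIV_local_const)
    have "z + s *\<^sub>R b \<in> blockU grp"
      using that unfolding ray by (intro gscale_in_blockU z) auto
    then show "DERIV (\<lambda>s. L (z + s *\<^sub>R b)) s :> G (z + s *\<^sub>R b) \<bullet> b"
      by (intro has_real_derivative_along_line gradient)
    show "\<forall>t. \<bar>s - t\<bar> < s + 1 \<longrightarrow> L (z + s *\<^sub>R b) = L (z + t *\<^sub>R b)"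
      using L_const that by auto
  qed (use that in simp)
  have "DERIV (\<lambda>s. G (z + s *\<^sub>R b) \<bullet> b) 0 :> (H z *v b) \<bullet> b"
    by (rule has_real_derivative_along_line[where F="\<lambda>y. G y \<bullet> b"])
      (use hessian z in \<open>auto intro!: derivative_eq_intros\<close>)
  moreover have "\<forall>t. \<bar>0 - t\<bar> < 1 \<longrightarrow> G (z + 0 *\<^sub>R b) \<bullet> b = G (z + t *\<^sub>R b) \<bullet> b"
    using slope_0 slope_0[of 0] by (simp add: abs_less_iff)
  ultimately have "(H z *v b) \<bullet> b = 0"
    by (rule DERIV_local_const[OF _ zero_less_one])
  then show ?thesis by (simp add: b_def inner_commute)
qed

lemma lambda_max_hessian_nonneg:
  assumes "z \<in> blockU grp"
  shows "lambda_max (H z) \<ge> 0"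
proof (rule lambda_max_nonneg)
  show "(H z *v u) \<bullet> w = u \<bullet> (H z *v w)" for u w
    using assms by (rule hessian_symmetric)
  show "blk grp z k \<noteq> 0" for k using assms by (simp add: blockU_def)
qed (simp add: quadratic_form_blk_eq_0[OF assms])

lemma quadratic_form_gscale:
  assumes "\<And>k. c k > 0" "y \<in> blockU grp"
  shows "gscale grp c w \<bullet> (H (gscale grp c y) *v gscale grp c w) = w \<bullet> (H y *v w)"
  by (simp add: inner_gscale_swap hessian_gscale[OF assms])

lemma curvature_bound_nonneg:
  assumes bdd: "bdd_above unit_block_lambdas"
    and y: "y \<in> blockU grp"
  shows "Sup unit_block_lambdas \<ge> 0"
proof -
  obtain z where z: "z \<in> blockU grp" and "\<And>k. norm (blk grp z k) = 1"
    using blockU_eq_gscale_unit_blocks[OF y] by blast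
  then have "lambda_max (H z) \<in> unit_block_lambdas"
    by auto
  from cSup_upper2[OF this lambda_max_hessian_nonneg[OF z] bdd] show ?thesis .
qed

lemma quadratic_form_le_curvature_bound:
  assumes bdd: "bdd_above unit_block_lambdas"
    and y: "y \<in> blockU grp"
  shows "v \<bullet> (H y *v v) \<le> Sup unit_block_lambdas
    * (\<Sum>k\<in>UNIV. (norm (blk grp v k))^2 / (norm (blk grp y k))^2)"
proof -
  define c where "c k = norm (blk grp y k)" for k
  have c: "c k > 0" for k using y by (simp add: c_def blockU_def)
  obtain z where z: "z \<in> blockU grp" and unit: "\<And>k. norm (blk grp z k) = 1"
    and yz: "y = gscale grp c z"
    using blockU_eq_gscale_unit_blocks[OF y] unfolding c_def by blast
  define w where "w = gscale grp (\<lambda>k. 1 / c k) v"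
  have vw: "v = gscale grp c w"
    unfolding w_def using c by (intro gscale_inverse[symmetric]) (simp add: order_less_imp_not_eq2)
  have "v \<bullet> (H y *v v) = w \<bullet> (H z *v w)"
    unfolding yz vw by (rule quadratic_form_gscale[OF c z])
  also have "\<dots> \<le> lambda_max (H z) * (norm w)^2"
    by (rule quadratic_form_le_lambda_max[OF hessian_symmetric[OF z]])
  also have "\<dots> \<le> Sup unit_block_lambdas * (norm w)^2"
    using unit by (intro mult_right_mono cSup_upper bdd) auto
  also have "(norm w)^2 = (\<Sum>k\<in>UNIV. (norm (blk grp w k))^2)"
    by (rule power2_norm_eq_sum_blk)
  also have "\<dots> = (\<Sum>k\<in>UNIV. (norm (blk grp v k))^2 / (c k)^2)"
    using c by (simp add: w_def blk_gscale power_divide abs_of_pos)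
  finally show ?thesis by (simp add: c_def)
qed

lemma quadratic_form_along_orthogonal_line:
  assumes bdd: "bdd_above unit_block_lambdas"
    and x: "x \<in> blockU grp" and orth: "\<And>k. blk grp x k \<bullet> blk grp v k = 0"
  shows "v \<bullet> (H (x + t *\<^sub>R v) *v v)
    \<le> Sup unit_block_lambdas * (\<Sum>k\<in>UNIV. (norm (blk grp v k))^2 / (norm (blk grp x k))^2)"
proof -
  have x_pos: "(norm (blk grp x k))^2 > 0" for k
    using x by (simp add: blockU_def)
  have grow: "(norm (blk grp x k))^2 \<le> (norm (blk grp (x + t *\<^sub>R v) k))^2" for k
    unfolding power2_norm_blk_add_orthogonal[OF orth] by simp
  have "(\<Sum>k\<in>UNIV. (norm (blk grp v k))^2 / (norm (blk grp (x + t *\<^sub>R v) k))^2)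
      \<le> (\<Sum>k\<in>UNIV. (norm (blk grp v k))^2 / (norm (blk grp x k))^2)"
    using x_pos grow order_less_le_trans[OF x_pos grow]
    by (intro sum_mono divide_left_mono mult_pos_pos) auto
  then show ?thesis
    using quadratic_form_le_curvature_bound[OF bdd orthogonal_line_in_blockU[OF x orth]]
      curvature_bound_nonneg[OF bdd x]
    by (meson mult_left_mono order_trans)
qed

end

theorem mainTheorem5:
  fixes grp :: "'n::{finite,linorder} \<Rightarrow> 'k::{finite,linorder}"
    and L :: "real^('n::{finite,linorder}) \<Rightarrow> real"
    and G :: "real^('n::{finite,linorder}) \<Rightarrow> real^('n::{finite,linorder})"
    and H :: "real^('n::{finite,linorder}) \<Rightarrow> real^('n::{finite,linorder})^('n::{finite,linorder})"
    and x v :: "real^('n::{finite,linorder})"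
  assumes grp_mono: "mono grp"
    and grp_surj: "surj grp"
    and inv: "multi_group_scale_invariant grp (blockU grp) L"
    and grad: "\<forall>y\<in>blockU grp. (L has_derivative (\<lambda>h. G y \<bullet> h)) (at y)"
    and hess: "\<forall>y\<in>blockU grp. (G has_derivative (\<lambda>h. H y *v h)) (at y)"
    and bdd: "bdd_above {lambda_max (H y) | y. \<forall>k. norm (blk grp y k) = 1}"
    and xU: "x \<in> blockU grp"
    and orth: "\<forall>k. blk grp x k \<bullet> blk grp v k = 0"
  shows "L (x + v) - L x \<le> v \<bullet> G x
     + (Sup {lambda_max (H y) | y. \<forall>k. norm (blk grp y k) = 1}) / 2
       * (\<Sum>k\<in>UNIV. (norm (blk grp v k))^2 / (norm (blk grp x k))^2)"
proof -
  interpret scale_invariant_twice_differentiable grp L G H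
    using inv grad hess by unfold_locales auto
  have line: "x + t *\<^sub>R v \<in> blockU grp" for t
    using orthogonal_line_in_blockU xU orth by blast
  have "L (x + 1 *\<^sub>R v) - L (x + 0 *\<^sub>R v) \<le> G (x + 0 *\<^sub>R v) \<bullet> v
      + Sup {lambda_max (H y) | y. \<forall>k. norm (blk grp y k) = 1}
        * (\<Sum>k\<in>UNIV. (norm (blk grp v k))^2 / (norm (blk grp x k))^2) / 2"
  proof (rule second_order_increment_le)
    show "((\<lambda>t. L (x + t *\<^sub>R v)) has_real_derivative G (x + t *\<^sub>R v) \<bullet> v) (at t)" for t
      using line by (intro has_real_derivative_along_line gradient)
    show "((\<lambda>t. G (x + t *\<^sub>R v) \<bullet> v) has_real_derivative v \<bullet> (H (x + t *\<^sub>R v) *v v)) (at t)" for t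
      by (rule has_real_derivative_along_line[where F="\<lambda>y. G y \<bullet> v"])
        (use hessian line in \<open>auto intro!: derivative_eq_intros simp: inner_commute\<close>)
  qed (rule quadratic_form_along_orthogonal_line[OF bdd xU orth[rule_format]])
  then show ?thesis by (simp add: inner_commute)
qed

end
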